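(* In the situation below, for all $g,h\in G$ the matrix $Y(gh)^{-1}Y(g)Y(h)$ lies in $\iota(E^\times\cdot 1_A)$, so there is a unique $\alpha(g,h)\in E^\times$ with $Y(g)Y(h)=Y(gh)\iota(\alpha(g,h)1_A)$. Letting $G$ act on $E$ by $z^g:=z^{\sigma_g}$, the function $\alpha:G\times G\to E^\times$ is a factor set, i.e. $\alpha(gh,k)\alpha(g,h)^k=\alpha(g,hk)\alpha(h,k)$ for all $g,h,k\in G$.
   Context: $p$ prime; $F$ a sufficiently large finite field of characteristic $p$ (residue field of a $p$-modular system), $\mathcal{H}$ a group of automorphisms of the $p$-modular system acting on $F$ and inducing all automorphisms of $F$. $(G,N,\theta)_{\mathcal{H}}$ is a modular $\mathcal{H}$-triple ($N\trianglelefteq G$ finite, $\theta\in\mathrm{IBr}(N)$ with $G$-stable $\mathcal{H}$-orbit), $E=\mathbb{F}_p[\theta]$ the subfield of $F$ generated by the reductions of the values of $\theta$, $m=\theta(1)$, $s=[E:\mathbb{F}_p]$, $X:N\to\mathrm{GL}_m(E)$ a representation affording $\theta$. For $g\in G$, $\sigma_g\in\mathrm{Gal}(E/\mathbb{F}_p)$ is the unique element such that $n\mapsto X(gng^{-1})^{\sigma_g}$ affords $\theta$; $T_g\in\mathrm{GL}_m(E)$ satisfies $X(gng^{-1})^{\sigma_g}=T_gX(n)T_g^{-1}$; $A=\mathrm{M}_m(E)$ is a $G$-algebra via $x^g=T_g^{-1}x^{\sigma_g}T_g$. $\iota:A\to\mathrm{M}_{ms}(\mathbb{F}_p)$ is a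 unitary $\mathbb{F}_p$-algebra embedding and $Y:G\to\mathrm{GL}_{ms}(\mathbb{F}_p)$ satisfies: $Y(g)^{-1}\iota(x)Y(g)=\iota(x^g)$ ($x\in A,g\in G$); $Y(n)=\iota(X(n))$ ($n\in N$); $Y(gn)=Y(g)Y(n)$, $Y(ng)=Y(n)Y(g)$ ($n\in N,g\in G$). *)

theory Defs
  imports "Jordan_Normal_Form.Matrix" "HOL-Algebra.Coset"
begin

definition mat_tr :: "'a::comm_ring_1 mat \<Rightarrow> 'a" where
  "mat_tr M = (\<Sum>i<dim_row M. M $$ (i,i))"

definition is_subfield :: "'a::field set \<Rightarrow> bool" where
  "is_subfield K \<longleftrightarrow> 0 \<in> K \<and> 1 \<in> K \<and>
     (\<forall>a\<in>K. \<forall>b\<in>K. a + b \<in> K \<and> a - b \<in> K \<and> a * b \<in> K) \<and>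
     (\<forall>a\<in>K. inverse a \<in> K)"

text \<open>Field automorphisms of E (= elements of Gal(E/F_p) when E is finite of char p).\<close>
definition field_aut :: "('a::field \<Rightarrow> 'a) \<Rightarrow> bool" where
  "field_aut f \<longleftrightarrow> bij f \<and> (\<forall>a b. f (a + b) = f a + f b) \<and>
     (\<forall>a b. f (a * b) = f a * f b) \<and> f 1 = 1"

definition is_rep :: "('g, 'b) monoid_scheme \<Rightarrow> 'g set \<Rightarrow> nat \<Rightarrow> ('g \<Rightarrow> 'a::field mat) \<Rightarrow> bool" where
  "is_rep G N m X \<longleftrightarrow> (\<forall>n\<in>N. X n \<in> carrier_mat m m \<and> invertible_mat (X n)) \<and>
     X \<one>\<^bsub>G\<^esub> = 1\<^sub>m m \<and> (\<forall>a\<in>N. \<forall>b\<in>N. X (a \<otimes>\<^bsub>G\<^esub> b) = X a * X b)"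

text \<open>Absolute irreducibility of X (irreducibility over the splitting field F, hence over
  every extension): by Burnside's theorem, the E-span of X(N) is all of M_m(E).\<close>
definition abs_irreducible :: "'g set \<Rightarrow> nat \<Rightarrow> ('g \<Rightarrow> 'a::field mat) \<Rightarrow> bool" where
  "abs_irreducible N m X \<longleftrightarrow> (\<forall>M \<in> carrier_mat m m. \<exists>c :: 'g \<Rightarrow> 'a.
      \<forall>i<m. \<forall>j<m. M $$ (i,j) = (\<Sum>n\<in>N. c n * X n $$ (i,j)))"

end

(*
  Conjugation by Y g acts on the image of the matrix algebra A as the Galois-twisted automorphism
  coming from g.  Since sigma_(gh) = sigma_h o sigma_g (by the uniqueness of sigma_(gh)), the
  matrices Y g * Y h and Y (gh) induce the same twist on the scalars and on iota(X(N)); the latter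
  spans iota(A) by absolute irreducibility.  Hence Y (gh)^-1 * Y g * Y h centralizes iota(A).
  The centralizer of iota(A) in M_ms(F_p) is iota(E 1): writing e_ij for the matrix units, the
  space F_p^ms is the direct sum of the m copies iota(e_i1) W of W = iota(e_11) F_p^ms, so
  |W| = |E|, and E acts freely on W by scalars; thus W = E v for any nonzero v in W, and a
  centralizing matrix is determined by its value at v.  Computing Y g * Y h * Y k in the two
  possible ways yields the cocycle identity.
*)
theory Submission
  imports Defs "Jordan_Normal_Form.Determinant" "Berlekamp_Zassenhaus.Berlekamp_Type_Based"
begin

lemma invertible_mat_inverse:
  assumes A: "A \<in> carrier_mat n n" and inv: "invertible_mat A"
  obtains B where "B \<in> carrier_mat n n" "A * B = 1\<^sub>m n" "B * A = 1\<^sub>m n"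
proof -
  obtain B where AB: "A * B = 1\<^sub>m (dim_row A)" and BA: "B * A = 1\<^sub>m (dim_row B)"
    using inv unfolding invertible_mat_def inverts_mat_def by blast
  have "dim_col B = n" using arg_cong[OF AB, of dim_col] A by simp
  moreover have "dim_row B = n" using arg_cong[OF BA, of dim_col] A by simp
  ultimately show ?thesis using that AB BA A by auto
qed

lemma invertible_mat_iff_det:
  fixes A :: "'a::field mat"
  assumes A: "A \<in> carrier_mat n n"
  shows "invertible_mat A \<longleftrightarrow> det A \<noteq> 0"
proof
  assume "invertible_mat A"
  then obtain B where B: "B \<in> carrier_mat n n" "A * B = 1\<^sub>m n"
    using A invertible_mat_inverse by blast
  show "det A \<noteq> 0" using arg_cong[OF B(2), of det] det_mult[OF A B(1)] by auto
next
  assume "det A \<noteq> 0"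
  then have "A \<in> Units (ring_mat TYPE('a) n ())" by (rule det_non_zero_imp_unit[OF A])
  then show "invertible_mat A"
    unfolding Units_def ring_mat_def invertible_mat_def inverts_mat_def using A by auto
qed

lemma invertible_mat_mult:
  fixes A B :: "'a::field mat"
  assumes "A \<in> carrier_mat n n" "B \<in> carrier_mat n n" "invertible_mat A" "invertible_mat B"
  shows "invertible_mat (A * B)"
  using assms
  by (simp add: invertible_mat_iff_det[OF mult_carrier_mat[OF assms(1,2)]] invertible_mat_iff_det det_mult)

lemma invertible_mat_mult_left_cancel:
  assumes P: "P \<in> carrier_mat n n" "invertible_mat P"
    and A: "A \<in> carrier_mat n k" and B: "B \<in> carrier_mat n k" and eq: "P * A = P * B"
  shows "A = B"
proof -
  obtain P' where P': "P' \<in> carrier_mat n n" "P' * P = 1\<^sub>m n"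
    using invertible_mat_inverse[OF P] by metis
  have "A = P' * (P * A)" using A P P' by (simp add: assoc_mult_mat[symmetric, of _ n n _ n _ k])
  also have "\<dots> = P' * (P * B)" by (simp only: eq)
  also have "\<dots> = B" using B P P' by (simp add: assoc_mult_mat[symmetric, of _ n n _ n _ k])
  finally show ?thesis .
qed

lemma field_aut_comm_ring_hom: "field_aut f \<Longrightarrow> comm_ring_hom f"
  unfolding field_aut_def
  by unfold_locales (auto, metis add_cancel_right_right)

lemma field_aut_invertible_mat:
  assumes f: "field_aut f" and A: "A \<in> carrier_mat n n" "invertible_mat A"
  shows "invertible_mat (map_mat f A)"
proof -
  interpret comm_ring_hom f by (rule field_aut_comm_ring_hom[OF f])
  have "inj f" using f by (simp add: field_aut_def bij_def)
  then show ?thesis using A by (auto simp: invertible_mat_iff_det dest: injD[where y = 0])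
qed

lemma commute_if_same_conjugation:
  fixes U :: "'a::comm_ring_1 mat"
  assumes U: "U \<in> carrier_mat n n" "U' \<in> carrier_mat n n" "U * U' = 1\<^sub>m n" "U' * U = 1\<^sub>m n"
    and K: "K \<in> carrier_mat n n" and P: "P \<in> carrier_mat n n" "P' \<in> carrier_mat n n"
    and UP: "U * P = P' * U" and KP: "K * P = P' * K"
  shows "(U' * K) * P = P * (U' * K)"
proof -
  have "U' * P' = U' * P' * (U * U')" using U P by simp
  also have "\<dots> = U' * (U * P) * U'" using U P UP by (simp add: assoc_mult_mat[of _ n n _ n _ n])
  also have "\<dots> = P * U'" using U P by (simp add: assoc_mult_mat[symmetric, of _ n n _ n _ n])
  finally have U'P': "U' * P' = P * U'" .
  have "(U' * K) * P = (U' * P') * K" using U K P KP by (simp add: assoc_mult_mat[of _ n n _ n _ n])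
  also have "\<dots> = P * (U' * K)" using U K P U'P' by (simp add: assoc_mult_mat[of _ n n _ n _ n])
  finally show ?thesis .
qed

definition scalar_mat :: "nat \<Rightarrow> 'a::semiring_1 \<Rightarrow> 'a mat" where
  "scalar_mat m c = c \<cdot>\<^sub>m 1\<^sub>m m"

definition matrix_unit :: "nat \<Rightarrow> nat \<Rightarrow> nat \<Rightarrow> 'a::semiring_1 mat" where
  "matrix_unit m i j = mat m m (\<lambda>(a, b). if a = i \<and> b = j then 1 else 0)"

definition partial_one_mat :: "nat \<Rightarrow> nat \<Rightarrow> 'a::semiring_1 mat" where
  "partial_one_mat m k = mat m m (\<lambda>(a, b). if a = b \<and> a < k then 1 else 0)"

lemma scalar_mat_carrier [simp]: "scalar_mat m c \<in> carrier_mat m m"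
  by (simp add: scalar_mat_def)

lemma matrix_unit_carrier [simp]: "matrix_unit m i j \<in> carrier_mat m m"
  by (simp add: matrix_unit_def)

lemma partial_one_mat_carrier [simp]: "partial_one_mat m k \<in> carrier_mat m m"
  by (simp add: partial_one_mat_def)

lemma scalar_mat_one: "scalar_mat m 1 = 1\<^sub>m m"
  by (intro eq_matI) (auto simp: scalar_mat_def)

lemma scalar_mat_mult: "scalar_mat m a * scalar_mat m b = scalar_mat m (a * b :: 'a::comm_semiring_1)"
  unfolding scalar_mat_def by (subst mult_smult_assoc_mat[of _ m m _ m]) (auto intro!: eq_matI)

lemma scalar_mat_diff: "scalar_mat m (a - b) = scalar_mat m a - scalar_mat m (b :: 'a::comm_ring_1)"
  by (intro eq_matI) (auto simp: scalar_mat_def algebra_simps)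

lemma scalar_mat_commute:
  assumes "M \<in> carrier_mat m m"
  shows "scalar_mat m c * M = M * scalar_mat m (c :: 'a::comm_ring_1)"
  using assms unfolding scalar_mat_def
  by (simp add: mult_smult_assoc_mat[of _ m m _ m] mult_smult_distrib[of _ m m _ m])

lemma map_mat_scalar_mat:
  assumes "field_aut f"
  shows "map_mat f (scalar_mat m c) = scalar_mat m (f c)"
proof -
  interpret comm_ring_hom f by (rule field_aut_comm_ring_hom[OF assms])
  show ?thesis by (intro eq_matI) (auto simp: scalar_mat_def)
qed

lemma matrix_unit_mult:
  assumes "j < m"
  shows "matrix_unit m i j * matrix_unit m k l = (if j = k then matrix_unit m i l else 0\<^sub>m m m)"
proof (rule eq_matI)
  fix a b assume "a < dim_row (if j = k then matrix_unit m i l else 0\<^sub>m m m :: 'a mat)"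
    and "b < dim_col (if j = k then matrix_unit m i l else 0\<^sub>m m m :: 'a mat)"
  then have ab: "a < m" "b < m" by (auto simp: matrix_unit_def split: if_splits)
  have "(matrix_unit m i j * matrix_unit m k l :: 'a mat) $$ (a, b) =
      (\<Sum>t\<in>{0..<m}. (if a = i \<and> t = j then 1 else 0) * (if t = k \<and> b = l then 1 else 0))"
    using ab by (simp add: matrix_unit_def scalar_prod_def)
  also have "\<dots> = (\<Sum>t\<in>{0..<m}. if t = j then (if a = i \<and> j = k \<and> b = l then 1 else 0) else 0)"
    by (rule sum.cong) auto
  also have "\<dots> = (if a = i \<and> j = k \<and> b = l then 1 else 0)" using assms by simp
  finally show "(matrix_unit m i j * matrix_unit m k l :: 'a mat) $$ (a, b) =
      (if j = k then matrix_unit m i l else 0\<^sub>m m m) $$ (a, b)"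
    using ab by (auto simp: matrix_unit_def)
qed (auto simp: matrix_unit_def)

lemma partial_one_mat_0: "partial_one_mat m 0 = 0\<^sub>m m m"
  by (intro eq_matI) (auto simp: partial_one_mat_def)

lemma partial_one_mat_Suc:
  "partial_one_mat m (Suc k) = partial_one_mat m k + matrix_unit m k k"
  by (intro eq_matI) (auto simp: partial_one_mat_def matrix_unit_def)

lemma partial_one_mat_full: "partial_one_mat m m = 1\<^sub>m m"
  by (intro eq_matI) (auto simp: partial_one_mat_def)

primrec vec_sum :: "nat \<Rightarrow> (nat \<Rightarrow> 'a::monoid_add vec) \<Rightarrow> nat \<Rightarrow> 'a vec" where
  "vec_sum n w 0 = 0\<^sub>v n"
| "vec_sum n w (Suc k) = vec_sum n w k + w k"

lemma vec_sum_carrier: "(\<And>i. i < k \<Longrightarrow> w i \<in> carrier_vec n) \<Longrightarrow> vec_sum n w k \<in> carrier_vec n"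
  by (induction k) auto

lemma vec_sum_cong: "(\<And>i. i < k \<Longrightarrow> w i = w' i) \<Longrightarrow> vec_sum n w k = vec_sum n w' k"
  by (induction k) auto

lemma mult_mat_vec_sum:
  fixes A :: "'a::semiring_0 mat"
  assumes A: "A \<in> carrier_mat n' n" and w: "\<And>i. i < k \<Longrightarrow> w i \<in> carrier_vec n"
  shows "A *\<^sub>v vec_sum n w k = vec_sum n' (\<lambda>i. A *\<^sub>v w i) k"
  using w
proof (induction k)
  case 0
  show ?case using A by (auto intro!: eq_vecI)
next
  case (Suc k)
  then show ?case
    using A by (simp add: mult_add_distrib_mat_vec[OF A vec_sum_carrier])
qed

lemma commute_mult_mat_vec:
  assumes "C \<in> carrier_mat n n" "M \<in> carrier_mat n n" "v \<in> carrier_vec n" "C * M = M * C"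
  shows "C *\<^sub>v (M *\<^sub>v v) = M *\<^sub>v (C *\<^sub>v v)"
  using assms by (metis assoc_mult_mat_vec)

lemma eq_mat_by_mult_vec:
  fixes A B :: "'a::comm_ring_1 mat"
  assumes A: "A \<in> carrier_mat n k" and B: "B \<in> carrier_mat n k"
    and eq: "\<And>v. v \<in> carrier_vec k \<Longrightarrow> A *\<^sub>v v = B *\<^sub>v v"
  shows "A = B"
proof (rule eq_matI)
  fix i j assume "i < dim_row B" "j < dim_col B"
  moreover have "(A *\<^sub>v unit_vec k j) $ i = (B *\<^sub>v unit_vec k j) $ i"
    using eq[of "unit_vec k j"] by simp
  ultimately show "A $$ (i, j) = B $$ (i, j)" using A B by simp
qed (use A B in auto)

section \<open>The centralizer of an embedded full matrix algebra\<close>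

locale mat_algebra_embedding =
  fixes \<iota> :: "'e::{finite,field} mat \<Rightarrow> 'f::{finite,field} mat" and m n :: nat
  assumes carrier: "\<And>x. x \<in> carrier_mat m m \<Longrightarrow> \<iota> x \<in> carrier_mat n n"
    and add: "\<And>x y. x \<in> carrier_mat m m \<Longrightarrow> y \<in> carrier_mat m m \<Longrightarrow> \<iota> (x + y) = \<iota> x + \<iota> y"
    and mult: "\<And>x y. x \<in> carrier_mat m m \<Longrightarrow> y \<in> carrier_mat m m \<Longrightarrow> \<iota> (x * y) = \<iota> x * \<iota> y"
    and one: "\<iota> (1\<^sub>m m) = 1\<^sub>m n"
    and inj: "inj_on \<iota> (carrier_mat m m)"
    and dim_pos: "m > 0"
    and card_eq: "card (UNIV :: 'e set) ^ m = card (UNIV :: 'f set) ^ n"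
begin

abbreviation E :: "nat \<Rightarrow> nat \<Rightarrow> 'f mat" where
  "E i j \<equiv> \<iota> (matrix_unit m i j)"

text \<open>The whole space is the direct sum of the \<open>m\<close>
  copies \<open>\<iota>(e\<^sub>i\<^sub>0) corner\<close>, and the embedded scalar matrices act simply transitively
  on the nonzero vectors of \<open>corner\<close>.\<close>

definition corner :: "'f vec set" where
  "corner = {w \<in> carrier_vec n. E 0 0 *\<^sub>v w = w}"

lemma zero: "\<iota> (0\<^sub>m m m) = 0\<^sub>m n n"
proof -
  let ?z = "\<iota> (0\<^sub>m m m)"
  have c: "?z \<in> carrier_mat n n" by (rule carrier) auto
  have h: "?z + ?z = ?z" using add[of "0\<^sub>m m m" "0\<^sub>m m m"] by simp
  show ?thesis
  proof (rule eq_matI)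
    fix i j assume "i < dim_row (0\<^sub>m n n :: 'f mat)" "j < dim_col (0\<^sub>m n n :: 'f mat)"
    then have "?z $$ (i, j) + ?z $$ (i, j) = ?z $$ (i, j)"
      using c arg_cong[OF h, of "\<lambda>M. M $$ (i, j)"] by simp
    then have "?z $$ (i, j) = 0" by (metis add_cancel_right_right)
    then show "?z $$ (i, j) = 0\<^sub>m n n $$ (i, j)" using c \<open>i < _\<close> \<open>j < _\<close> by simp
  qed (use c in auto)
qed

lemma diff:
  assumes x: "x \<in> carrier_mat m m" and y: "y \<in> carrier_mat m m"
  shows "\<iota> (x - y) = \<iota> x - \<iota> y"
proof -
  have "x - y + y = x" using x y by (intro eq_matI) auto
  then have "\<iota> x = \<iota> (x - y) + \<iota> y" using add[of "x - y" y] x y minus_carrier_mat by metis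
  then show ?thesis using carrier[OF x] carrier[OF y] carrier[OF minus_carrier_mat[OF y]]
    by (intro eq_matI) auto
qed

lemma scalar_commute:
  "M \<in> carrier_mat m m \<Longrightarrow> \<iota> (scalar_mat m c) * \<iota> M = \<iota> M * \<iota> (scalar_mat m c)"
  by (simp add: mult[symmetric] scalar_mat_commute)

lemma scalar_mult: "\<iota> (scalar_mat m a) * \<iota> (scalar_mat m b) = \<iota> (scalar_mat m (a * b))"
  by (simp add: mult[symmetric] scalar_mat_mult)

lemma scalar_inj:
  assumes "\<iota> (scalar_mat m a) = \<iota> (scalar_mat m b)"
  shows "a = b"
proof -
  have "scalar_mat m a = scalar_mat m b" using assms inj by (simp add: inj_on_def)
  then have "scalar_mat m a $$ (0, 0) = scalar_mat m b $$ (0, 0)" by simp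
  then show ?thesis using dim_pos by (simp add: scalar_mat_def)
qed

lemma E_mult: "j < m \<Longrightarrow> E i j * E k l = (if j = k then E i l else 0\<^sub>m n n)"
  by (simp add: mult[symmetric] matrix_unit_mult zero)

lemma target_dim_pos: "n > 0"
proof (rule ccontr)
  assume "\<not> n > 0"
  then have "\<iota> (0\<^sub>m m m) = \<iota> (1\<^sub>m m)" by (auto simp: zero one intro!: eq_matI)
  then have "(0\<^sub>m m m :: 'e mat) = 1\<^sub>m m" by (rule inj_onD[OF inj]) auto
  then have "(0\<^sub>m m m :: 'e mat) $$ (0, 0) = 1\<^sub>m m $$ (0, 0)" by simp
  then show False using dim_pos by simp
qed

lemma E_carrier [simp]: "E i j \<in> carrier_mat n n" "dim_row (E i j) = n" "dim_col (E i j) = n"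
  using carrier[OF matrix_unit_carrier] by auto

lemma E_mult_vec_carrier [simp]: "v \<in> carrier_vec n \<Longrightarrow> E i j *\<^sub>v v \<in> carrier_vec n"
  by (rule mult_mat_vec_carrier[OF E_carrier(1)])

lemma scalar_carrier [simp]:
  "\<iota> (scalar_mat m c) \<in> carrier_mat n n" "dim_row (\<iota> (scalar_mat m c)) = n"
  using carrier[OF scalar_mat_carrier] by auto

lemma corner_closed:
  assumes C: "C \<in> carrier_mat n n" "C * E 0 0 = E 0 0 * C" and w: "w \<in> corner"
  shows "C *\<^sub>v w \<in> corner"
proof -
  from w have w: "w \<in> carrier_vec n" "E 0 0 *\<^sub>v w = w" by (auto simp: corner_def)
  have "E 0 0 *\<^sub>v (C *\<^sub>v w) = C *\<^sub>v (E 0 0 *\<^sub>v w)"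
    using commute_mult_mat_vec[OF C(1) E_carrier(1) w(1) C(2)] by simp
  then show ?thesis using w C(1) by (simp add: corner_def)
qed

lemma corner_coordinate:
  assumes v: "v \<in> carrier_vec n"
  shows "E 0 i *\<^sub>v v \<in> corner"
  using v dim_pos by (simp add: corner_def assoc_mult_mat_vec[symmetric, of _ n n _ n] E_mult)

lemma corner_coordinate_vec_sum:
  assumes "\<And>i. i < k \<Longrightarrow> w i \<in> corner" "j < m" "k \<le> m"
  shows "E 0 j *\<^sub>v vec_sum n (\<lambda>i. E i 0 *\<^sub>v w i) k = (if j < k then w j else 0\<^sub>v n)"
  using assms
proof (induction k)
  case 0
  show ?case by (auto intro!: eq_vecI)
next
  case (Suc k)
  have w: "w i \<in> carrier_vec n" "E 0 0 *\<^sub>v w i = w i" if "i < Suc k" for i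
    using Suc.prems(1)[OF that] by (auto simp: corner_def)
  have "E 0 j *\<^sub>v (E k 0 *\<^sub>v w k) = (if j = k then w k else 0\<^sub>v n)"
    using Suc.prems w[of k] by (auto simp: assoc_mult_mat_vec[symmetric, of _ n n _ n] E_mult)
  moreover have "vec_sum n (\<lambda>i. E i 0 *\<^sub>v w i) k \<in> carrier_vec n"
    using w by (intro vec_sum_carrier) auto
  ultimately show ?case
    using Suc w by (auto simp: mult_add_distrib_mat_vec[of _ n n])
qed

lemma vec_sum_corner_coordinates:
  assumes v: "v \<in> carrier_vec n" and "k \<le> m"
  shows "vec_sum n (\<lambda>i. E i 0 *\<^sub>v (E 0 i *\<^sub>v v)) k = \<iota> (partial_one_mat m k) *\<^sub>v v"
  using assms(2)
proof (induction k)
  case 0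
  show ?case using v by (auto simp: partial_one_mat_0 zero intro!: eq_vecI)
next
  case (Suc k)
  have "E k 0 *\<^sub>v (E 0 k *\<^sub>v v) = E k k *\<^sub>v v"
    using Suc.prems v by (simp add: assoc_mult_mat_vec[symmetric, of _ n n _ n] E_mult)
  then show ?case
    using Suc v carrier[OF partial_one_mat_carrier]
    by (simp add: partial_one_mat_Suc add add_mult_distrib_mat_vec[of _ n n])
qed

lemma corner_decomposition:
  "v \<in> carrier_vec n \<Longrightarrow> vec_sum n (\<lambda>i. E i 0 *\<^sub>v (E 0 i *\<^sub>v v)) m = v"
  by (simp add: vec_sum_corner_coordinates partial_one_mat_full one)

lemma corner_coordinates_bij:
  "bij_betw (\<lambda>v. restrict (\<lambda>i. E 0 i *\<^sub>v v) {..<m}) (carrier_vec n) ({..<m} \<rightarrow>\<^sub>E corner)"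
proof (rule bij_betwI[where g = "\<lambda>w. vec_sum n (\<lambda>i. E i 0 *\<^sub>v w i) m"])
  show "(\<lambda>v. restrict (\<lambda>i. E 0 i *\<^sub>v v) {..<m}) \<in> carrier_vec n \<rightarrow> {..<m} \<rightarrow>\<^sub>E corner"
    by (simp add: corner_coordinate)
  show "(\<lambda>w. vec_sum n (\<lambda>i. E i 0 *\<^sub>v w i) m) \<in> ({..<m} \<rightarrow>\<^sub>E corner) \<rightarrow> carrier_vec n"
  proof
    fix w assume w: "w \<in> {..<m} \<rightarrow>\<^sub>E corner"
    show "vec_sum n (\<lambda>i. E i 0 *\<^sub>v w i) m \<in> carrier_vec n"
    proof (rule vec_sum_carrier)
      fix i assume "i < m"
      then have "w i \<in> corner" using w by auto
      then show "E i 0 *\<^sub>v w i \<in> carrier_vec n" by (simp add: corner_def)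
    qed
  qed
  show "vec_sum n (\<lambda>i. E i 0 *\<^sub>v restrict (\<lambda>i. E 0 i *\<^sub>v v) {..<m} i) m = v"
    if "v \<in> carrier_vec n" for v
  proof -
    have "vec_sum n (\<lambda>i. E i 0 *\<^sub>v restrict (\<lambda>i. E 0 i *\<^sub>v v) {..<m} i) m =
        vec_sum n (\<lambda>i. E i 0 *\<^sub>v (E 0 i *\<^sub>v v)) m"
      by (rule vec_sum_cong) simp
    then show ?thesis using corner_decomposition[OF that] by simp
  qed
  show "restrict (\<lambda>i. E 0 i *\<^sub>v vec_sum n (\<lambda>i. E i 0 *\<^sub>v w i) m) {..<m} = w"
    if w: "w \<in> {..<m} \<rightarrow>\<^sub>E corner" for w
  proof
    fix i
    have wc: "w j \<in> corner" if "j < m" for j using PiE_mem[OF w] that by simp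
    show "restrict (\<lambda>i. E 0 i *\<^sub>v vec_sum n (\<lambda>i. E i 0 *\<^sub>v w i) m) {..<m} i = w i"
    proof (cases "i < m")
      case True
      have "E 0 i *\<^sub>v vec_sum n (\<lambda>i. E i 0 *\<^sub>v w i) m = w i"
        using corner_coordinate_vec_sum[of m w i, OF wc True order.refl] True by simp
      then show ?thesis using True by simp
    next
      case False
      then show ?thesis using PiE_arb[OF w, of i] by simp
    qed
  qed
qed

lemma card_corner: "card corner = card (UNIV :: 'e set)"
proof -
  have "card corner ^ m = card (carrier_vec n :: 'f vec set)"
    using bij_betw_same_card[OF corner_coordinates_bij] by (simp add: card_PiE)
  also have "\<dots> = card (UNIV :: 'e set) ^ m"
    by (simp add: card_carrier_vec card_eq)
  finally show ?thesis by (rule power_eq_imp_eq_base) (use dim_pos in auto)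
qed

lemma eq_if_eq_on_corner:
  assumes C: "C \<in> carrier_mat n n" "\<And>M. M \<in> carrier_mat m m \<Longrightarrow> C * \<iota> M = \<iota> M * C"
    and C': "C' \<in> carrier_mat n n" "\<And>M. M \<in> carrier_mat m m \<Longrightarrow> C' * \<iota> M = \<iota> M * C'"
    and eq: "\<And>w. w \<in> corner \<Longrightarrow> C *\<^sub>v w = C' *\<^sub>v w"
  shows "C = C'"
proof (rule eq_mat_by_mult_vec[OF C(1) C'(1)])
  fix v :: "'f vec" assume v: "v \<in> carrier_vec n"
  have expand: "D *\<^sub>v v = vec_sum n (\<lambda>i. E i 0 *\<^sub>v (D *\<^sub>v (E 0 i *\<^sub>v v))) m"
    if "D \<in> carrier_mat n n" "\<And>M. M \<in> carrier_mat m m \<Longrightarrow> D * \<iota> M = \<iota> M * D" for D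
  proof -
    have "D *\<^sub>v v = D *\<^sub>v vec_sum n (\<lambda>i. E i 0 *\<^sub>v (E 0 i *\<^sub>v v)) m"
      using corner_decomposition[OF v] by simp
    also have "\<dots> = vec_sum n (\<lambda>i. D *\<^sub>v (E i 0 *\<^sub>v (E 0 i *\<^sub>v v))) m"
      using v by (intro mult_mat_vec_sum[OF that(1)]) simp
    also have "\<dots> = vec_sum n (\<lambda>i. E i 0 *\<^sub>v (D *\<^sub>v (E 0 i *\<^sub>v v))) m"
      using that v by (intro vec_sum_cong commute_mult_mat_vec[where n = n]) simp_all
    finally show ?thesis .
  qed
  have "C *\<^sub>v v = vec_sum n (\<lambda>i. E i 0 *\<^sub>v (C *\<^sub>v (E 0 i *\<^sub>v v))) m"
    by (rule expand[OF C])
  also have "\<dots> = vec_sum n (\<lambda>i. E i 0 *\<^sub>v (C' *\<^sub>v (E 0 i *\<^sub>v v))) m"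
    using eq[OF corner_coordinate[OF v]] by (intro vec_sum_cong) simp
  also have "\<dots> = C' *\<^sub>v v"
    by (rule expand[OF C', symmetric])
  finally show "C *\<^sub>v v = C' *\<^sub>v v" .
qed

lemma corner_eq_scalar_orbit:
  assumes v0: "v0 \<in> corner" "v0 \<noteq> 0\<^sub>v n"
  shows "corner = range (\<lambda>c. \<iota> (scalar_mat m c) *\<^sub>v v0)"
proof -
  let ?f = "\<lambda>c. \<iota> (scalar_mat m c) *\<^sub>v v0"
  have v0c: "v0 \<in> carrier_vec n" using v0 by (simp add: corner_def)
  have into: "range ?f \<subseteq> corner"
    using corner_closed[OF scalar_carrier(1) scalar_commute[OF matrix_unit_carrier] v0(1)] by auto
  have "inj ?f"
  proof (rule injI, rule ccontr)
    fix a b assume eq: "?f a = ?f b" and "a \<noteq> b"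
    have "\<iota> (scalar_mat m (a - b)) *\<^sub>v v0 = ?f a - ?f b"
      using v0c by (simp add: scalar_mat_diff diff minus_mult_distrib_mat_vec[of _ n n])
    then have zero_vec: "\<iota> (scalar_mat m (a - b)) *\<^sub>v v0 = 0\<^sub>v n"
      unfolding eq using v0c by (auto intro!: eq_vecI)
    have "v0 = \<iota> (scalar_mat m (inverse (a - b))) *\<^sub>v (\<iota> (scalar_mat m (a - b)) *\<^sub>v v0)"
      using \<open>a \<noteq> b\<close> v0c
      by (simp add: assoc_mult_mat_vec[symmetric, of _ n n _ n] scalar_mult scalar_mat_one one)
    also have "\<dots> = 0\<^sub>v n" unfolding zero_vec by (auto intro!: eq_vecI)
    finally show False using v0(2) by simp
  qed
  have "finite corner" by (simp add: corner_def)
  then show ?thesis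
    using into card_image[OF \<open>inj ?f\<close>] card_corner by (intro card_subset_eq[symmetric]) auto
qed

theorem centralizer_eq_scalars:
  assumes Z: "Z \<in> carrier_mat n n" and comm: "\<And>M. M \<in> carrier_mat m m \<Longrightarrow> Z * \<iota> M = \<iota> M * Z"
  obtains c where "Z = \<iota> (scalar_mat m c)"
proof -
  have "card {0\<^sub>v n :: 'f vec} < card corner"
    using card_corner card_mono[of UNIV "{0, 1 :: 'e}"] by simp
  then obtain v0 where v0: "v0 \<in> corner" "v0 \<noteq> 0\<^sub>v n"
    by (metis card_mono finite.emptyI finite_insert not_le subsetI singletonI singleton_iff)
  note orbit = corner_eq_scalar_orbit[OF v0]
  have "Z *\<^sub>v v0 \<in> corner" by (rule corner_closed[OF Z comm[OF matrix_unit_carrier] v0(1)])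
  then obtain l where l: "Z *\<^sub>v v0 = \<iota> (scalar_mat m l) *\<^sub>v v0" using orbit by blast
  have v0c: "v0 \<in> carrier_vec n" using v0 by (simp add: corner_def)
  have "Z = \<iota> (scalar_mat m l)"
  proof (rule eq_if_eq_on_corner[OF Z comm scalar_carrier(1) scalar_commute])
    fix w assume "w \<in> corner"
    then obtain u where w: "w = \<iota> (scalar_mat m u) *\<^sub>v v0" using orbit by blast
    have "Z *\<^sub>v w = \<iota> (scalar_mat m u) *\<^sub>v (Z *\<^sub>v v0)"
      unfolding w using Z v0c comm[of "scalar_mat m u"] by (intro commute_mult_mat_vec) simp_all
    also have "\<dots> = \<iota> (scalar_mat m l) *\<^sub>v w"
      unfolding l w using v0c scalar_commute[of "scalar_mat m l" u]
      by (intro commute_mult_mat_vec[symmetric]) simp_all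
    finally show "Z *\<^sub>v w = \<iota> (scalar_mat m l) *\<^sub>v w" .
  qed
  then show ?thesis by (rule that)
qed

lemma commute_add:
  assumes "A \<in> carrier_mat m m" "B \<in> carrier_mat m m" "Z \<in> carrier_mat n n"
    and "Z * \<iota> A = \<iota> A * Z" "Z * \<iota> B = \<iota> B * Z"
  shows "Z * \<iota> (A + B) = \<iota> (A + B) * Z"
  using assms carrier[of A] carrier[of B]
  by (simp add: add mult_add_distrib_mat[of _ n n] add_mult_distrib_mat[of _ n n])

lemma commute_mult:
  assumes A: "A \<in> carrier_mat m m" and B: "B \<in> carrier_mat m m" and Z: "Z \<in> carrier_mat n n"
    and "Z * \<iota> A = \<iota> A * Z" "Z * \<iota> B = \<iota> B * Z"
  shows "Z * \<iota> (A * B) = \<iota> (A * B) * Z"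
proof -
  have iA: "\<iota> A \<in> carrier_mat n n" and iB: "\<iota> B \<in> carrier_mat n n"
    using carrier A B by auto
  have "Z * (\<iota> A * \<iota> B) = (Z * \<iota> A) * \<iota> B"
    using Z iA iB by (simp add: assoc_mult_mat[of _ n n _ n _ n])
  also have "\<dots> = \<iota> A * (Z * \<iota> B)"
    using Z iA iB assms(4) by (simp add: assoc_mult_mat[of _ n n _ n _ n])
  also have "\<dots> = \<iota> A * \<iota> B * Z"
    using Z iA iB assms(5) by (simp add: assoc_mult_mat[of _ n n _ n _ n])
  finally show ?thesis using A B by (simp add: mult)
qed

lemma commute_if_commute_generators:
  assumes Z: "Z \<in> carrier_mat n n" and N: "finite N" "abs_irreducible N m X"
    and X: "\<And>x. x \<in> N \<Longrightarrow> X x \<in> carrier_mat m m"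
    and Z_scalar: "\<And>c. Z * \<iota> (scalar_mat m c) = \<iota> (scalar_mat m c) * Z"
    and Z_X: "\<And>x. x \<in> N \<Longrightarrow> Z * \<iota> (X x) = \<iota> (X x) * Z"
    and M: "M \<in> carrier_mat m m"
  shows "Z * \<iota> M = \<iota> M * Z"
proof -
  obtain c where c: "\<forall>i<m. \<forall>j<m. M $$ (i, j) = (\<Sum>x\<in>N. c x * X x $$ (i, j))"
    using N(2) M unfolding abs_irreducible_def by blast
  define S where "S K = mat m m (\<lambda>(i, j). \<Sum>x\<in>K. c x * X x $$ (i, j))" for K
  have S_carrier: "S K \<in> carrier_mat m m" for K by (simp add: S_def)
  have "K \<subseteq> N \<Longrightarrow> Z * \<iota> (S K) = \<iota> (S K) * Z" if "finite K" for K
    using that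
  proof (induction K rule: finite_induct)
    case empty
    have "S {} = 0\<^sub>m m m" by (auto simp: S_def intro!: eq_matI)
    then show ?case using Z by (simp add: zero)
  next
    case (insert x K)
    then have x: "x \<in> N" by simp
    have "S (insert x K) = scalar_mat m (c x) * X x + S K"
      using insert X[OF x]
      by (auto simp: S_def scalar_mat_def mult_smult_assoc_mat[of _ m m _ m] intro!: eq_matI)
    moreover have "Z * \<iota> (scalar_mat m (c x) * X x) = \<iota> (scalar_mat m (c x) * X x) * Z"
      by (rule commute_mult[OF scalar_mat_carrier X[OF x] Z Z_scalar Z_X[OF x]])
    ultimately show ?case
      using insert by (simp add: commute_add[OF mult_carrier_mat[OF scalar_mat_carrier X[OF x]] S_carrier Z])
  qed
  moreover have "S N = M" using c M by (auto simp: S_def intro!: eq_matI)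
  ultimately show ?thesis using N(1) by blast
qed

end

section \<open>The factor set of a projective lift\<close>

lemma map_mat_comp: "map_mat (f \<circ> g) A = map_mat f (map_mat g A)"
  by (intro eq_matI) auto

locale projective_lift = mat_algebra_embedding \<iota> m n + group G
  for \<iota> :: "'e::{finite,field} mat \<Rightarrow> 'f::{finite,field} mat" and m n :: nat
    and G :: "('g, 'b) monoid_scheme" +
  fixes N :: "'g set" and X :: "'g \<Rightarrow> 'e mat" and \<sigma> :: "'g \<Rightarrow> 'e \<Rightarrow> 'e"
    and T :: "'g \<Rightarrow> 'e mat" and Y :: "'g \<Rightarrow> 'f mat"
  assumes finite_G: "finite (carrier G)" and normal_N: "N \<lhd> G"
    and X_carrier: "\<And>x. x \<in> N \<Longrightarrow> X x \<in> carrier_mat m m"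
    and X_irr: "abs_irreducible N m X"
    and \<sigma>_aut: "\<And>g. g \<in> carrier G \<Longrightarrow> field_aut (\<sigma> g)"
    and T_inv: "\<And>g. g \<in> carrier G \<Longrightarrow> T g \<in> carrier_mat m m \<and> invertible_mat (T g)"
    and T_conj: "\<And>g x. g \<in> carrier G \<Longrightarrow> x \<in> N \<Longrightarrow>
        map_mat (\<sigma> g) (X (g \<otimes>\<^bsub>G\<^esub> x \<otimes>\<^bsub>G\<^esub> inv\<^bsub>G\<^esub> g)) * T g = T g * X x"
    and \<sigma>_unique: "\<And>g \<tau> S. g \<in> carrier G \<Longrightarrow> field_aut \<tau> \<Longrightarrow>
        S \<in> carrier_mat m m \<Longrightarrow> invertible_mat S \<Longrightarrow>
        (\<forall>x\<in>N. map_mat \<tau> (X (g \<otimes>\<^bsub>G\<^esub> x \<otimes>\<^bsub>G\<^esub> inv\<^bsub>G\<^esub> g)) * S = S * X x) \<Longrightarrow> \<tau> = \<sigma> g"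
    and Y_GL: "\<And>g. g \<in> carrier G \<Longrightarrow> Y g \<in> carrier_mat n n \<and> invertible_mat (Y g)"
    and Y_conj: "\<And>g x y. g \<in> carrier G \<Longrightarrow> x \<in> carrier_mat m m \<Longrightarrow> y \<in> carrier_mat m m \<Longrightarrow>
        T g * y = map_mat (\<sigma> g) x * T g \<Longrightarrow> \<iota> x * Y g = Y g * \<iota> y"
    and Y_N: "\<And>x. x \<in> N \<Longrightarrow> Y x = \<iota> (X x)"
    and Y_right: "\<And>g x. g \<in> carrier G \<Longrightarrow> x \<in> N \<Longrightarrow> Y (g \<otimes>\<^bsub>G\<^esub> x) = Y g * Y x"
    and Y_left: "\<And>g x. g \<in> carrier G \<Longrightarrow> x \<in> N \<Longrightarrow> Y (x \<otimes>\<^bsub>G\<^esub> g) = Y x * Y g"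
begin

lemma N_subset: "N \<subseteq> carrier G"
  using normal_imp_subgroup[OF normal_N] subgroup.subset by blast

lemma conj_in_N: "g \<in> carrier G \<Longrightarrow> x \<in> N \<Longrightarrow> g \<otimes>\<^bsub>G\<^esub> x \<otimes>\<^bsub>G\<^esub> inv\<^bsub>G\<^esub> g \<in> N"
  using normal.inv_op_closed2[OF normal_N] by blast

lemma Y_carrier [simp]: "g \<in> carrier G \<Longrightarrow> Y g \<in> carrier_mat n n"
  using Y_GL by blast

lemma \<sigma>_mult:
  assumes g: "g \<in> carrier G" and h: "h \<in> carrier G"
  shows "\<sigma> (g \<otimes>\<^bsub>G\<^esub> h) = \<sigma> h \<circ> \<sigma> g"
proof -
  interpret \<sigma>h: comm_ring_hom "\<sigma> h" by (rule field_aut_comm_ring_hom[OF \<sigma>_aut[OF h]])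
  have Tg: "T g \<in> carrier_mat m m" "invertible_mat (T g)" and Th: "T h \<in> carrier_mat m m" "invertible_mat (T h)"
    using T_inv g h by auto
  let ?S = "map_mat (\<sigma> h) (T g) * T h"
  show ?thesis
  proof (rule \<sigma>_unique[symmetric, of "g \<otimes>\<^bsub>G\<^esub> h" _ ?S])
    show "field_aut (\<sigma> h \<circ> \<sigma> g)"
      using \<sigma>_aut[OF g] \<sigma>_aut[OF h] unfolding field_aut_def by (auto intro: bij_comp)
    show "invertible_mat ?S"
      using Tg Th by (intro invertible_mat_mult field_aut_invertible_mat[OF \<sigma>_aut[OF h]]) auto
    show "\<forall>x\<in>N. map_mat (\<sigma> h \<circ> \<sigma> g) (X (g \<otimes>\<^bsub>G\<^esub> h \<otimes>\<^bsub>G\<^esub> x \<otimes>\<^bsub>G\<^esub> inv\<^bsub>G\<^esub> (g \<otimes>\<^bsub>G\<^esub> h))) * ?S = ?S * X x"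
    proof
      fix x assume x: "x \<in> N"
      define x' where "x' = h \<otimes>\<^bsub>G\<^esub> x \<otimes>\<^bsub>G\<^esub> inv\<^bsub>G\<^esub> h"
      have x': "x' \<in> N" unfolding x'_def using conj_in_N[OF h x] .
      have "g \<otimes>\<^bsub>G\<^esub> h \<otimes>\<^bsub>G\<^esub> x \<otimes>\<^bsub>G\<^esub> inv\<^bsub>G\<^esub> (g \<otimes>\<^bsub>G\<^esub> h) = g \<otimes>\<^bsub>G\<^esub> x' \<otimes>\<^bsub>G\<^esub> inv\<^bsub>G\<^esub> g"
        using g h x N_subset by (auto simp: x'_def m_assoc inv_mult_group)
      then have conj: "X (g \<otimes>\<^bsub>G\<^esub> h \<otimes>\<^bsub>G\<^esub> x \<otimes>\<^bsub>G\<^esub> inv\<^bsub>G\<^esub> (g \<otimes>\<^bsub>G\<^esub> h)) = X (g \<otimes>\<^bsub>G\<^esub> x' \<otimes>\<^bsub>G\<^esub> inv\<^bsub>G\<^esub> g)"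
        by simp
      obtain Xgx' where Xgx': "X (g \<otimes>\<^bsub>G\<^esub> x' \<otimes>\<^bsub>G\<^esub> inv\<^bsub>G\<^esub> g) = Xgx'" "Xgx' \<in> carrier_mat m m"
        using X_carrier[OF conj_in_N[OF g x']] by blast
      have Xx': "X x' \<in> carrier_mat m m" using X_carrier[OF x'] .
      let ?Tg = "map_mat (\<sigma> h) (T g)" and ?Xx' = "map_mat (\<sigma> h) (X x')"
      have gx': "map_mat (\<sigma> h) (map_mat (\<sigma> g) Xgx') * ?Tg = ?Tg * ?Xx'"
        using arg_cong[OF T_conj[OF g x'], of "map_mat (\<sigma> h)"] Tg(1) Xgx' Xx'
        by (simp add: \<sigma>h.mat_hom_mult[of _ m m _ m])
      have hx: "?Xx' * T h = T h * X x"
        unfolding x'_def by (rule T_conj[OF h x])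
      have "map_mat (\<sigma> h \<circ> \<sigma> g) Xgx' * ?S = (map_mat (\<sigma> h) (map_mat (\<sigma> g) Xgx') * ?Tg) * T h"
        using Tg(1) Th(1) Xgx' by (simp add: map_mat_comp assoc_mult_mat[of _ m m _ m _ m])
      also have "\<dots> = ?Tg * (?Xx' * T h)"
        using Tg(1) Th(1) Xx' by (simp add: gx' assoc_mult_mat[of _ m m _ m _ m])
      also have "\<dots> = ?S * X x"
        using Tg(1) Th(1) X_carrier[OF x] by (simp add: hx assoc_mult_mat[of _ m m _ m _ m])
      finally show "map_mat (\<sigma> h \<circ> \<sigma> g) (X (g \<otimes>\<^bsub>G\<^esub> h \<otimes>\<^bsub>G\<^esub> x \<otimes>\<^bsub>G\<^esub> inv\<^bsub>G\<^esub> (g \<otimes>\<^bsub>G\<^esub> h))) * ?S = ?S * X x"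
        using conj Xgx'(1) by simp
    qed
  qed (use g h Tg Th in auto)
qed

lemma scalar_mult_Y:
  "g \<in> carrier G \<Longrightarrow> \<iota> (scalar_mat m c) * Y g = Y g * \<iota> (scalar_mat m (\<sigma> g c))"
  using T_inv by (intro Y_conj) (auto simp: map_mat_scalar_mat \<sigma>_aut scalar_mat_commute)

lemma Y_mult_rep:
  assumes g: "g \<in> carrier G" and x: "x \<in> N"
  shows "Y g * \<iota> (X x) = \<iota> (X (g \<otimes>\<^bsub>G\<^esub> x \<otimes>\<^bsub>G\<^esub> inv\<^bsub>G\<^esub> g)) * Y g"
proof -
  have "g \<otimes>\<^bsub>G\<^esub> x = (g \<otimes>\<^bsub>G\<^esub> x \<otimes>\<^bsub>G\<^esub> inv\<^bsub>G\<^esub> g) \<otimes>\<^bsub>G\<^esub> g"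
    using g x N_subset by (auto simp: m_assoc)
  then show ?thesis
    using Y_right[OF g x] Y_left[OF g conj_in_N[OF g x]] Y_N[OF x] Y_N[OF conj_in_N[OF g x]] by simp
qed

lemma Y_mult_Y_scalar:
  assumes g: "g \<in> carrier G" and h: "h \<in> carrier G"
  shows "(Y g * Y h) * \<iota> (scalar_mat m (\<sigma> (g \<otimes>\<^bsub>G\<^esub> h) c)) = \<iota> (scalar_mat m c) * (Y g * Y h)"
proof -
  have "(Y g * Y h) * \<iota> (scalar_mat m (\<sigma> (g \<otimes>\<^bsub>G\<^esub> h) c)) =
      Y g * (Y h * \<iota> (scalar_mat m (\<sigma> h (\<sigma> g c))))"
    using g h by (simp add: \<sigma>_mult assoc_mult_mat[of _ n n _ n _ n])
  also have "\<dots> = (Y g * \<iota> (scalar_mat m (\<sigma> g c))) * Y h"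
    using g h by (simp add: scalar_mult_Y[OF h, of "\<sigma> g c", symmetric] assoc_mult_mat[of _ n n _ n _ n])
  also have "\<dots> = (\<iota> (scalar_mat m c) * Y g) * Y h"
    using scalar_mult_Y[OF g, of c] by simp
  also have "\<dots> = \<iota> (scalar_mat m c) * (Y g * Y h)"
    using g h by (simp add: assoc_mult_mat[of _ n n _ n _ n])
  finally show ?thesis .
qed

lemma Y_mult_Y_rep:
  assumes g: "g \<in> carrier G" and h: "h \<in> carrier G" and x: "x \<in> N"
  shows "(Y g * Y h) * \<iota> (X x) = \<iota> (X ((g \<otimes>\<^bsub>G\<^esub> h) \<otimes>\<^bsub>G\<^esub> x \<otimes>\<^bsub>G\<^esub> inv\<^bsub>G\<^esub> (g \<otimes>\<^bsub>G\<^esub> h))) * (Y g * Y h)"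
proof -
  define xh where "xh = h \<otimes>\<^bsub>G\<^esub> x \<otimes>\<^bsub>G\<^esub> inv\<^bsub>G\<^esub> h"
  define xgh where "xgh = (g \<otimes>\<^bsub>G\<^esub> h) \<otimes>\<^bsub>G\<^esub> x \<otimes>\<^bsub>G\<^esub> inv\<^bsub>G\<^esub> (g \<otimes>\<^bsub>G\<^esub> h)"
  have xh: "xh \<in> N" and xgh: "xgh \<in> N"
    unfolding xh_def xgh_def using conj_in_N[OF h x] conj_in_N[OF m_closed[OF g h] x] .
  have "g \<otimes>\<^bsub>G\<^esub> xh \<otimes>\<^bsub>G\<^esub> inv\<^bsub>G\<^esub> g = xgh"
    using g h x N_subset by (auto simp: xh_def xgh_def m_assoc inv_mult_group)
  then have gxh: "Y g * \<iota> (X xh) = \<iota> (X xgh) * Y g" using Y_mult_rep[OF g xh] by simp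
  have "(Y g * Y h) * \<iota> (X x) = Y g * (Y h * \<iota> (X x))"
    using g h x X_carrier by (simp add: assoc_mult_mat[of _ n n _ n _ n] carrier)
  also have "\<dots> = (Y g * \<iota> (X xh)) * Y h"
    using g h xh X_carrier
    by (simp add: Y_mult_rep[OF h x, folded xh_def] assoc_mult_mat[of _ n n _ n _ n] carrier)
  also have "\<dots> = \<iota> (X xgh) * (Y g * Y h)"
    using g h xgh X_carrier by (simp add: gxh assoc_mult_mat[of _ n n _ n _ n] carrier)
  finally show ?thesis unfolding xgh_def .
qed

lemma Y_mult_Y_eq_scalar:
  assumes g: "g \<in> carrier G" and h: "h \<in> carrier G"
  obtains c where "Y g * Y h = Y (g \<otimes>\<^bsub>G\<^esub> h) * \<iota> (scalar_mat m c)"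
proof -
  let ?U = "Y (g \<otimes>\<^bsub>G\<^esub> h)" and ?K = "Y g * Y h"
  have gh: "g \<otimes>\<^bsub>G\<^esub> h \<in> carrier G" using g h by simp
  obtain U' where U': "U' \<in> carrier_mat n n" "?U * U' = 1\<^sub>m n" "U' * ?U = 1\<^sub>m n"
    using invertible_mat_inverse[of ?U] Y_GL[OF gh] by blast
  have K: "?K \<in> carrier_mat n n" using mult_carrier_mat[OF Y_carrier[OF g] Y_carrier[OF h]] .
  have Z: "U' * ?K \<in> carrier_mat n n" using U'(1) K by simp
  \<comment> \<open>\<open>U' * K\<close> commutes with the generators of \<open>\<iota>(A)\<close>, since \<open>U\<close> and \<open>K\<close> conjugate them alike\<close>
  note commute = commute_if_same_conjugation[OF Y_carrier[OF gh] U' K]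
  have scalar: "U' * ?K * \<iota> (scalar_mat m d) = \<iota> (scalar_mat m d) * (U' * ?K)" for d
  proof -
    obtain c where d: "d = \<sigma> (g \<otimes>\<^bsub>G\<^esub> h) c"
      using \<sigma>_aut[OF gh] by (metis field_aut_def bij_def surjD)
    show ?thesis
      using scalar_mult_Y[OF gh, of c] Y_mult_Y_scalar[OF g h, of c] by (intro commute) (simp_all add: d)
  qed
  have rep: "U' * ?K * \<iota> (X x) = \<iota> (X x) * (U' * ?K)" if x: "x \<in> N" for x
    using Y_mult_rep[OF gh x] Y_mult_Y_rep[OF g h x] conj_in_N[OF gh x] x
    by (intro commute) (simp_all add: carrier X_carrier)
  obtain c where c: "U' * ?K = \<iota> (scalar_mat m c)"
  proof (rule centralizer_eq_scalars[OF Z])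
    show "U' * ?K * \<iota> M = \<iota> M * (U' * ?K)" if "M \<in> carrier_mat m m" for M
      by (rule commute_if_commute_generators[OF Z finite_subset[OF N_subset finite_G] X_irr X_carrier
          scalar rep that])
  qed
  have "?K = ?U * (U' * ?K)"
    using U' K Y_carrier[OF gh] by (simp add: left_mult_one_mat[OF K] assoc_mult_mat[symmetric, of _ n n _ n _ n])
  then show ?thesis using c that by simp
qed

lemma Y_mult_scalar_cancel:
  assumes k: "k \<in> carrier G" and eq: "Y k * \<iota> (scalar_mat m a) = Y k * \<iota> (scalar_mat m b)"
  shows "a = b"
proof (rule scalar_inj)
  show "\<iota> (scalar_mat m a) = \<iota> (scalar_mat m b)"
    using Y_GL[OF k] invertible_mat_mult_left_cancel[OF _ _ scalar_carrier(1) scalar_carrier(1) eq]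
    by blast
qed

definition factor_set :: "'g \<Rightarrow> 'g \<Rightarrow> 'e" where
  "factor_set g h = (THE c. Y g * Y h = Y (g \<otimes>\<^bsub>G\<^esub> h) * \<iota> (scalar_mat m c))"

lemma Y_mult_Y_factor_set:
  assumes "g \<in> carrier G" "h \<in> carrier G"
  shows "Y g * Y h = Y (g \<otimes>\<^bsub>G\<^esub> h) * \<iota> (scalar_mat m (factor_set g h))"
proof -
  obtain c where c: "Y g * Y h = Y (g \<otimes>\<^bsub>G\<^esub> h) * \<iota> (scalar_mat m c)"
    using Y_mult_Y_eq_scalar[OF assms] .
  have gh: "g \<otimes>\<^bsub>G\<^esub> h \<in> carrier G" using assms by simp
  have "factor_set g h = c"
    unfolding factor_set_def
  proof (rule the_equality)
    fix c' assume "Y g * Y h = Y (g \<otimes>\<^bsub>G\<^esub> h) * \<iota> (scalar_mat m c')"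
    then show "c' = c" using c by (intro Y_mult_scalar_cancel[OF gh]) simp
  qed (rule c)
  then show ?thesis using c by simp
qed

lemma factor_set_unique:
  assumes g: "g \<in> carrier G" and h: "h \<in> carrier G"
    and c: "Y g * Y h = Y (g \<otimes>\<^bsub>G\<^esub> h) * \<iota> (scalar_mat m c)"
  shows "c = factor_set g h"
proof (rule Y_mult_scalar_cancel)
  show "g \<otimes>\<^bsub>G\<^esub> h \<in> carrier G" using g h by simp
  show "Y (g \<otimes>\<^bsub>G\<^esub> h) * \<iota> (scalar_mat m c) = Y (g \<otimes>\<^bsub>G\<^esub> h) * \<iota> (scalar_mat m (factor_set g h))"
    using c Y_mult_Y_factor_set[OF g h] by simp
qed

lemma factor_set_nonzero:
  assumes g: "g \<in> carrier G" and h: "h \<in> carrier G"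
  shows "factor_set g h \<noteq> 0"
proof
  assume "factor_set g h = 0"
  moreover have "scalar_mat m 0 = (0\<^sub>m m m :: 'e mat)"
    by (auto simp: scalar_mat_def intro!: eq_matI)
  ultimately have "Y g * Y h = 0\<^sub>m n n"
    using Y_mult_Y_factor_set[OF g h] g h by (simp add: zero right_mult_zero_mat[of _ n n])
  moreover have "invertible_mat (Y g * Y h)"
    using Y_GL g h by (intro invertible_mat_mult[of _ n]) auto
  ultimately have "invertible_mat (0\<^sub>m n n :: 'f mat)" by simp
  then have "det (0\<^sub>m n n :: 'f mat) \<noteq> 0" by (simp add: invertible_mat_iff_det[of _ n])
  then show False using target_dim_pos by simp
qed

theorem factor_set_cocycle:
  assumes g: "g \<in> carrier G" and h: "h \<in> carrier G" and k: "k \<in> carrier G"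
  shows "factor_set (g \<otimes>\<^bsub>G\<^esub> h) k * \<sigma> k (factor_set g h) =
    factor_set g (h \<otimes>\<^bsub>G\<^esub> k) * factor_set h k"
proof -
  let ?\<alpha> = factor_set and ?s = "\<lambda>c. \<iota> (scalar_mat m c)"
  have gh: "g \<otimes>\<^bsub>G\<^esub> h \<in> carrier G" and hk: "h \<otimes>\<^bsub>G\<^esub> k \<in> carrier G"
    and ghk: "g \<otimes>\<^bsub>G\<^esub> h \<otimes>\<^bsub>G\<^esub> k \<in> carrier G" using g h k by auto
  note assoc = assoc_mult_mat[of _ n n _ n _ n]
  have "Y (g \<otimes>\<^bsub>G\<^esub> h \<otimes>\<^bsub>G\<^esub> k) * ?s (?\<alpha> (g \<otimes>\<^bsub>G\<^esub> h) k * \<sigma> k (?\<alpha> g h)) =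
      (Y (g \<otimes>\<^bsub>G\<^esub> h) * Y k) * ?s (\<sigma> k (?\<alpha> g h))"
    using ghk by (simp add: Y_mult_Y_factor_set[OF gh k] scalar_mult[symmetric] assoc)
  also have "\<dots> = Y (g \<otimes>\<^bsub>G\<^esub> h) * (?s (?\<alpha> g h) * Y k)"
    using gh k by (simp add: scalar_mult_Y[OF k] assoc)
  also have "\<dots> = Y g * (Y h * Y k)"
    using g h k gh by (simp add: Y_mult_Y_factor_set[OF g h] assoc[symmetric])
  also have "\<dots> = Y (g \<otimes>\<^bsub>G\<^esub> (h \<otimes>\<^bsub>G\<^esub> k)) * ?s (?\<alpha> g (h \<otimes>\<^bsub>G\<^esub> k) * ?\<alpha> h k)"
    using g hk ghk
    by (simp add: Y_mult_Y_factor_set[OF h k] Y_mult_Y_factor_set[OF g hk, symmetric]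
        scalar_mult[symmetric] assoc[symmetric] m_assoc)
  finally show ?thesis
    using Y_mult_scalar_cancel[OF ghk] g h k by (simp add: m_assoc)
qed


end

theorem mainTheorem9:
  fixes G :: "('g, 'b) monoid_scheme" and N :: "'g set"
    and p m s :: nat
    and X :: "'g \<Rightarrow> 'e::{finite,field} mat"
    and \<sigma> :: "'g \<Rightarrow> 'e \<Rightarrow> 'e"
    and T :: "'g \<Rightarrow> 'e mat"
    and \<iota> :: "'e mat \<Rightarrow> 'f::{finite,field} mat"
    and Y :: "'g \<Rightarrow> 'f mat"
  assumes grp: "group G" and finG: "finite (carrier G)" and nrm: "N \<lhd> G"
    and p: "prime p" and Fp: "card (UNIV :: 'f set) = p" and charE: "of_nat p = (0::'e)"
    and s: "card (UNIV :: 'e set) = p ^ s"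
    and m: "m > 0"
    and X_rep: "is_rep G N m X"
    and X_irr: "abs_irreducible N m X"
    and E_gen: "\<And>K. is_subfield K \<Longrightarrow> (\<forall>n\<in>N. mat_tr (X n) \<in> K) \<Longrightarrow> K = (UNIV :: 'e set)"
    and \<sigma>_aut: "\<And>g. g \<in> carrier G \<Longrightarrow> field_aut (\<sigma> g)"
    and T_inv: "\<And>g. g \<in> carrier G \<Longrightarrow> T g \<in> carrier_mat m m \<and> invertible_mat (T g)"
    and T_conj: "\<And>g n. g \<in> carrier G \<Longrightarrow> n \<in> N \<Longrightarrow>
        map_mat (\<sigma> g) (X (g \<otimes>\<^bsub>G\<^esub> n \<otimes>\<^bsub>G\<^esub> inv\<^bsub>G\<^esub> g)) * T g = T g * X n"
    and \<sigma>_unique: "\<And>g \<tau> S. g \<in> carrier G \<Longrightarrow> field_aut \<tau> \<Longrightarrow>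
        S \<in> carrier_mat m m \<Longrightarrow> invertible_mat S \<Longrightarrow>
        (\<forall>n\<in>N. map_mat \<tau> (X (g \<otimes>\<^bsub>G\<^esub> n \<otimes>\<^bsub>G\<^esub> inv\<^bsub>G\<^esub> g)) * S = S * X n) \<Longrightarrow> \<tau> = \<sigma> g"
    and \<iota>_carrier: "\<And>x. x \<in> carrier_mat m m \<Longrightarrow> \<iota> x \<in> carrier_mat (m * s) (m * s)"
    and \<iota>_add: "\<And>x y. x \<in> carrier_mat m m \<Longrightarrow> y \<in> carrier_mat m m \<Longrightarrow> \<iota> (x + y) = \<iota> x + \<iota> y"
    and \<iota>_mult: "\<And>x y. x \<in> carrier_mat m m \<Longrightarrow> y \<in> carrier_mat m m \<Longrightarrow> \<iota> (x * y) = \<iota> x * \<iota> y"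
    and \<iota>_one: "\<iota> (1\<^sub>m m) = 1\<^sub>m (m * s)"
    and \<iota>_inj: "inj_on \<iota> (carrier_mat m m)"
    and Y_GL: "\<And>g. g \<in> carrier G \<Longrightarrow> Y g \<in> carrier_mat (m * s) (m * s) \<and> invertible_mat (Y g)"
    and Y_conj: "\<And>g x y. g \<in> carrier G \<Longrightarrow> x \<in> carrier_mat m m \<Longrightarrow> y \<in> carrier_mat m m \<Longrightarrow>
        T g * y = map_mat (\<sigma> g) x * T g \<Longrightarrow> \<iota> x * Y g = Y g * \<iota> y"
    and Y_N: "\<And>n. n \<in> N \<Longrightarrow> Y n = \<iota> (X n)"
    and Y_right: "\<And>g n. g \<in> carrier G \<Longrightarrow> n \<in> N \<Longrightarrow> Y (g \<otimes>\<^bsub>G\<^esub> n) = Y g * Y n"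
    and Y_left: "\<And>g n. g \<in> carrier G \<Longrightarrow> n \<in> N \<Longrightarrow> Y (n \<otimes>\<^bsub>G\<^esub> g) = Y n * Y g"
  shows "\<exists>\<alpha> :: 'g \<Rightarrow> 'g \<Rightarrow> 'e.
     (\<forall>g\<in>carrier G. \<forall>h\<in>carrier G.
        \<alpha> g h \<noteq> 0 \<and> Y g * Y h = Y (g \<otimes>\<^bsub>G\<^esub> h) * \<iota> (\<alpha> g h \<cdot>\<^sub>m 1\<^sub>m m) \<and>
        (\<forall>a. a \<noteq> 0 \<and> Y g * Y h = Y (g \<otimes>\<^bsub>G\<^esub> h) * \<iota> (a \<cdot>\<^sub>m 1\<^sub>m m) \<longrightarrow> a = \<alpha> g h)) \<and>
     (\<forall>g\<in>carrier G. \<forall>h\<in>carrier G. \<forall>k\<in>carrier G.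
        \<alpha> (g \<otimes>\<^bsub>G\<^esub> h) k * \<sigma> k (\<alpha> g h) = \<alpha> g (h \<otimes>\<^bsub>G\<^esub> k) * \<alpha> h k)"
proof -
  have "card (UNIV :: 'e set) = card (UNIV :: 'f set) ^ s" using Fp s by simp
  then have card: "card (UNIV :: 'e set) ^ m = card (UNIV :: 'f set) ^ (m * s)"
    by (simp add: power_mult[symmetric] mult.commute)
  have X_carrier: "\<And>x. x \<in> N \<Longrightarrow> X x \<in> carrier_mat m m" using X_rep by (simp add: is_rep_def)
  interpret projective_lift \<iota> m "m * s" G N X \<sigma> T Y
    using mat_algebra_embedding.intro[OF \<iota>_carrier \<iota>_add \<iota>_mult \<iota>_one \<iota>_inj m card] grp
      projective_lift_axioms.intro[OF finG nrm X_carrier X_irr \<sigma>_aut T_inv T_conj \<sigma>_unique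
        Y_GL Y_conj Y_N Y_right Y_left]
    by (rule projective_lift.intro)
  show ?thesis
    unfolding scalar_mat_def[symmetric]
  proof (intro exI[of _ factor_set] conjI ballI allI impI)
    fix g h assume gh: "g \<in> carrier G" "h \<in> carrier G"
    show "factor_set g h \<noteq> 0" using factor_set_nonzero[OF gh] .
    show "Y g * Y h = Y (g \<otimes>\<^bsub>G\<^esub> h) * \<iota> (scalar_mat m (factor_set g h))"
      using Y_mult_Y_factor_set[OF gh] .
    show "a = factor_set g h" if "a \<noteq> 0 \<and> Y g * Y h = Y (g \<otimes>\<^bsub>G\<^esub> h) * \<iota> (scalar_mat m a)" for a
      using factor_set_unique[OF gh] that by blast
  qed (rule factor_set_cocycle)
qed

end
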